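(* Let $\mathsf{k}$ be a field of characteristic zero, $S=\mathsf{k}[x_1,\dots,x_n]$ with $n\ge2$, $R=\mathsf{k}[X_1,\dots,X_n]$ with $S$ acting by differentiation, $F\in R$ nonzero homogeneous of degree $d\ge2$, $A=S/\operatorname{Ann}_S(F)$ and $\ell\in S_1$. Let $\mathbf d=(\dim_{\mathsf{k}}A^{(0)},\dim_{\mathsf{k}}A^{(1)},\dots,\dim_{\mathsf{k}}A^{(d)})$ and $\mathbf n=(n_0,\dots,n_d)=\Delta^2\mathbf d$. Then the Jordan type of $\ell$ on $A$ is $$P_{\ell,A}=\big(\underbrace{d+1,\dots,d+1}_{n_d},\underbrace{d,\dots,d}_{n_{d-1}},\dots,\underbrace{2,\dots,2}_{n_1},\underbrace{1,\dots,1}_{n_0}\big).$$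
   Context: $x_i$ acts as $\partial/\partial X_i$; $\operatorname{Ann}_S(G)=\{g\in S:g\circ G=0\}$. $A^{(i)}:=S/\operatorname{Ann}_S(\ell^i\circ F)$ for $0\le i\le d$ (the zero algebra if $\ell^i\circ F=0$); $\dim_{\mathsf{k}}A^{(i)}$ is its total $\mathsf{k}$-dimension, and $\dim_{\mathsf{k}}A^{(i)}:=0$ for $i>d$. $\Delta^2\mathbf d(i)=\dim_{\mathsf{k}}A^{(i)}+\dim_{\mathsf{k}}A^{(i+2)}-2\dim_{\mathsf{k}}A^{(i+1)}$. The Jordan type $P_{\ell,A}$ is the partition of $\dim_{\mathsf{k}}A$ given by the sizes of the Jordan blocks of the nilpotent multiplication map $\times\ell:A\to A$. *)

theory Defs
  imports Main "HOL-Library.Poly_Mapping" "HOL-Library.Multiset"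
begin

text \<open>The same carrier type serves both for S = k[x_0..x_{n-1}] and for
R = k[X_0..X_{n-1}].\<close>

type_synonym 'a mpoly = "(nat \<Rightarrow>\<^sub>0 nat) \<Rightarrow>\<^sub>0 'a"

definition poly_in :: "nat \<Rightarrow> ('a::zero) mpoly \<Rightarrow> bool" where
  "poly_in n p \<longleftrightarrow> (\<forall>m \<in> Poly_Mapping.keys p. Poly_Mapping.keys m \<subseteq> {..<n})"

definition polys :: "nat \<Rightarrow> ('a::zero) mpoly set" where
  "polys n = {p. poly_in n p}"

definition mdeg :: "(nat \<Rightarrow>\<^sub>0 nat) \<Rightarrow> nat" where
  "mdeg m = (\<Sum>i\<in>Poly_Mapping.keys m. Poly_Mapping.lookup m i)"

definition homogeneous :: "nat \<Rightarrow> ('a::zero) mpoly \<Rightarrow> bool" where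
  "homogeneous d p \<longleftrightarrow> (\<forall>m \<in> Poly_Mapping.keys p. mdeg m = d)"

definition smult_mp :: "'a::semiring_0 \<Rightarrow> 'a mpoly \<Rightarrow> 'a mpoly" where
  "smult_mp c p = Poly_Mapping.map (\<lambda>x. c * x) p"

text \<open>Differentiation action: the monomial x^a acts on X^b as
partial derivative, giving (b!/(b-a)!) X^(b-a) if a \<le> b, and 0 otherwise.\<close>

definition mon_le :: "(nat \<Rightarrow>\<^sub>0 nat) \<Rightarrow> (nat \<Rightarrow>\<^sub>0 nat) \<Rightarrow> bool" where
  "mon_le a b \<longleftrightarrow> (\<forall>i. Poly_Mapping.lookup a i \<le> Poly_Mapping.lookup b i)"

definition diff_coeff :: "(nat \<Rightarrow>\<^sub>0 nat) \<Rightarrow> (nat \<Rightarrow>\<^sub>0 nat) \<Rightarrow> 'a::semiring_1" where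
  "diff_coeff a b = of_nat (\<Prod>i\<in>Poly_Mapping.keys b. fact (Poly_Mapping.lookup b i) div fact (Poly_Mapping.lookup b i - Poly_Mapping.lookup a i))"

definition contract :: "('a::comm_semiring_1) mpoly \<Rightarrow> 'a mpoly \<Rightarrow> 'a mpoly" (infixr "\<circ>\<^sub>D" 70) where
  "g \<circ>\<^sub>D F = (\<Sum>a\<in>Poly_Mapping.keys g. \<Sum>b\<in>Poly_Mapping.keys F.
      if mon_le a b then Poly_Mapping.single (b - a) (Poly_Mapping.lookup g a * Poly_Mapping.lookup F b * diff_coeff a b) else 0)"

definition Ann :: "nat \<Rightarrow> ('a::comm_semiring_1) mpoly \<Rightarrow> 'a mpoly set" where
  "Ann n G = {g \<in> polys n. g \<circ>\<^sub>D G = 0}"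

definition basis_mod :: "('a::comm_ring_1) mpoly set \<Rightarrow> 'a mpoly set \<Rightarrow> ('i \<Rightarrow> 'a mpoly) \<Rightarrow> 'i set \<Rightarrow> bool" where
  "basis_mod S I B J \<longleftrightarrow> finite J \<and> B ` J \<subseteq> S \<and>
     (\<forall>c. (\<Sum>j\<in>J. smult_mp (c j) (B j)) \<in> I \<longrightarrow> (\<forall>j\<in>J. c j = 0)) \<and>
     (\<forall>p\<in>S. \<exists>c. p - (\<Sum>j\<in>J. smult_mp (c j) (B j)) \<in> I)"

definition qdim :: "('a::comm_ring_1) mpoly set \<Rightarrow> 'a mpoly set \<Rightarrow> nat" where
  "qdim S I = (THE m. \<exists>B :: nat \<Rightarrow> 'a mpoly. basis_mod S I B {..<m})"

text \<open>dim_k A^(i), A^(i) = S / Ann_S(l^i \<circ> F); zero for i > d.\<close>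

definition dimA :: "nat \<Rightarrow> nat \<Rightarrow> ('a::comm_ring_1) mpoly \<Rightarrow> 'a mpoly \<Rightarrow> nat \<Rightarrow> nat" where
  "dimA n d F l i = (if i \<le> d then qdim (polys n) (Ann n ((l ^ i) \<circ>\<^sub>D F)) else 0)"

text \<open>Jordan type of multiplication by l on S/I: the multiset of sizes of the
Jordan blocks, i.e. of the strings v, l v, ..., l^(k-1) v (with l^k v = 0 in S/I)
in a Jordan basis of S/I.\<close>

definition jordan_type :: "('a::comm_ring_1) mpoly set \<Rightarrow> 'a mpoly set \<Rightarrow> 'a mpoly \<Rightarrow> nat multiset" where
  "jordan_type S I l = (THE P. \<exists>js :: ('a mpoly \<times> nat) list.
       P = mset (map snd js) \<and>
       (\<forall>(v, k) \<in> set js. 1 \<le> k \<and> l ^ k * v \<in> I) \<and>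
       basis_mod S I (\<lambda>(j, t). l ^ t * fst (js ! j)) {(j, t). j < length js \<and> t < snd (js ! j)})"

end

theory Submission
  imports Defs "HOL.Vector_Spaces"
begin

text \<open>Contraction \<open>g \<mapsto> g \<circ> F\<close> identifies \<open>A = S / Ann(F)\<close> with the space
  \<open>W = S \<circ> F\<close> of derivatives of \<open>F\<close>; multiplication by \<open>\<ell>\<close> becomes the operator
  \<open>L = \<ell> \<circ> _\<close> on \<open>W\<close>, nilpotent because \<open>F\<close> is homogeneous, and \<open>A^(i)\<close> becomes
  \<open>S \<circ> (\<ell>^i \<circ> F) = L^i W\<close>, so \<open>dim A^(i) = rank L^i\<close>. A nilpotent operator has a
  basis of Jordan strings (by induction on the nilpotency index, lifting a string basis of
  \<open>L W\<close>), and if the strings have lengths \<open>k_j\<close> then \<open>rank L^i = \<Sum>_j (k_j - i)_+\<close>.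
  Hence the number of strings of length \<open>i + 1\<close> is the second difference of
  \<open>i \<mapsto> dim A^(i)\<close>, whatever the Jordan basis.\<close>

section \<open>Linear algebra of nilpotent operators\<close>

text \<open>Bases are indexed families, as in \<^const>\<open>basis_mod\<close>; Jordan bases are indexed by
  pairs (string, position).\<close>

context vector_space begin

definition fam_independent :: "('i \<Rightarrow> 'b) \<Rightarrow> 'i set \<Rightarrow> bool" where
  "fam_independent f J \<longleftrightarrow> (\<forall>c. (\<Sum>j\<in>J. c j *s f j) = 0 \<longrightarrow> (\<forall>j\<in>J. c j = 0))"

definition fam_basis :: "'b set \<Rightarrow> ('i \<Rightarrow> 'b) \<Rightarrow> 'i set \<Rightarrow> bool" where
  "fam_basis W f J \<longleftrightarrow> finite J \<and> f ` J \<subseteq> W \<and> fam_independent f J \<and> W \<subseteq> span (f ` J)"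

lemma fam_independentD:
  "fam_independent f J \<Longrightarrow> (\<Sum>j\<in>J. c j *s f j) = 0 \<Longrightarrow> j \<in> J \<Longrightarrow> c j = 0"
  unfolding fam_independent_def by blast

lemma fam_independent_subset:
  assumes "fam_independent f J" "finite J" "I \<subseteq> J"
  shows "fam_independent f I"
  unfolding fam_independent_def
proof (intro allI impI ballI)
  fix c i assume s: "(\<Sum>j\<in>I. c j *s f j) = 0" and i: "i \<in> I"
  define c' where "c' j = (if j \<in> I then c j else 0)" for j
  have "(\<Sum>j\<in>J. c' j *s f j) = (\<Sum>j\<in>I. c j *s f j)"
    using assms by (intro sum.mono_neutral_cong_right) (auto simp: c'_def)
  hence "c' i = 0" using s assms(3) i fam_independentD[OF assms(1), of c'] by auto
  thus "c i = 0" using i by (simp add: c'_def)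
qed

lemma fam_independent_nonzero:
  assumes "fam_independent f J" "j \<in> J"
  shows "f j \<noteq> 0"
proof
  assume "f j = 0"
  hence "(\<Sum>k\<in>J. (if k = j then 1 else 0) *s f k) = 0" by (intro sum.neutral) auto
  from fam_independentD[OF assms(1) this assms(2)] show False by simp
qed

lemma fam_independent_inj_on:
  assumes "finite J" "fam_independent f J"
  shows "inj_on f J"
proof (rule inj_onI, rule ccontr)
  fix i j assume ij: "i \<in> J" "j \<in> J" "f i = f j" "i \<noteq> j"
  define c where "c k = (if k = i then 1 else if k = j then -1 else (0::'a))" for k
  have "(\<Sum>k\<in>J. c k *s f k) = (\<Sum>k\<in>{i, j}. c k *s f k)"
    by (rule sum.mono_neutral_right) (use assms(1) ij(1,2) in \<open>auto simp: c_def\<close>)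
  also have "\<dots> = 0" using ij(3,4) by (simp add: c_def)
  finally have "c i = 0" using fam_independentD[OF assms(2)] ij(1) by blast
  thus False by (simp add: c_def)
qed

lemma fam_independent_iff:
  assumes "finite J"
  shows "fam_independent f J \<longleftrightarrow> inj_on f J \<and> independent (f ` J)"
proof
  assume ind: "fam_independent f J"
  have inj: "inj_on f J" using fam_independent_inj_on[OF assms ind] .
  moreover have "independent (f ` J)"
  proof (rule independent_if_scalars_zero)
    show "finite (f ` J)" using assms by simp
    fix u x assume s: "(\<Sum>x\<in>f ` J. u x *s x) = 0" and x: "x \<in> f ` J"
    have "(\<Sum>j\<in>J. u (f j) *s f j) = 0" using s by (simp add: sum.reindex[OF inj])
    thus "u x = 0" using fam_independentD[OF ind, of "\<lambda>j. u (f j)"] x by blast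
  qed
  ultimately show "inj_on f J \<and> independent (f ` J)" ..
next
  assume "inj_on f J \<and> independent (f ` J)"
  hence inj: "inj_on f J" and ind: "independent (f ` J)" by auto
  show "fam_independent f J"
    unfolding fam_independent_def
  proof (intro allI impI ballI)
    fix c j assume s: "(\<Sum>j\<in>J. c j *s f j) = 0" and j: "j \<in> J"
    define u where "u v = c (the_inv_into J f v)" for v
    have "(\<Sum>v\<in>f ` J. u v *s v) = (\<Sum>j\<in>J. c j *s f j)"
      by (simp add: sum.reindex[OF inj] u_def the_inv_into_f_f[OF inj])
    hence "u (f j) = 0" using independentD[OF ind _ subset_refl] s assms j by auto
    thus "c j = 0" by (simp add: u_def the_inv_into_f_f[OF inj j])
  qed
qed

lemma span_image_fam_coeffs:
  assumes "finite J" "inj_on f J" "y \<in> span (f ` J)"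
  obtains c where "y = (\<Sum>j\<in>J. c j *s f j)"
proof -
  from assms(3) obtain u where "y = (\<Sum>v\<in>f ` J. u v *s v)"
    using span_finite[of "f ` J"] assms(1) by auto
  hence "y = (\<Sum>j\<in>J. u (f j) *s f j)" by (simp add: sum.reindex[OF assms(2)])
  thus thesis by (rule that)
qed

lemma fam_basis_dim:
  assumes "fam_basis W f J"
  shows "dim W = card J"
proof -
  have fin: "finite J" and ind: "fam_independent f J" using assms unfolding fam_basis_def by auto
  have "dim W = card (f ` J)"
    by (rule dim_unique) (use assms fam_independent_iff[OF fin] ind in \<open>auto simp: fam_basis_def\<close>)
  thus ?thesis using card_image fam_independent_inj_on[OF fin ind] by simp
qed

lemma fam_basis_cong:
  assumes "fam_basis W f J" "\<And>j. j \<in> J \<Longrightarrow> f j = g j"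
  shows "fam_basis W g J"
proof -
  have "f ` J = g ` J" using assms(2) by (rule image_cong[OF refl])
  moreover have "(\<Sum>j\<in>J. c j *s f j) = (\<Sum>j\<in>J. c j *s g j)" for c
    using assms(2) by (intro sum.cong) auto
  ultimately show ?thesis using assms(1) unfolding fam_basis_def fam_independent_def by simp
qed

end

locale endomorphism = vector_space scale
  for scale :: "'a::field \<Rightarrow> 'b::ab_group_add \<Rightarrow> 'b" (infixr "*s" 75) +
  fixes L :: "'b \<Rightarrow> 'b"
  assumes L_add: "L (x + y) = L x + L y" and L_scale: "L (c *s x) = c *s L x"
begin

lemma module_hom_funpow: "module_hom scale scale (L ^^ k)"
proof -
  have "(L ^^ k) (x + y) = (L ^^ k) x + (L ^^ k) y" for x y
    by (induction k) (simp_all add: L_add)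
  moreover have "(L ^^ k) (c *s x) = c *s (L ^^ k) x" for c x
    by (induction k) (simp_all add: L_scale)
  ultimately show ?thesis
    using vector_space_axioms by (simp add: module_hom_iff module_iff_vector_space)
qed

lemma module_hom_L: "module_hom scale scale L"
  using module_hom_funpow[of 1] by simp

lemma L_sum: "L (sum g S) = (\<Sum>a\<in>S. L (g a))"
  by (rule module_hom.sum[OF module_hom_L])

lemma L_diff: "L (x - y) = L x - L y"
  by (rule module_hom.diff[OF module_hom_L])

lemma L_zero [simp]: "L 0 = 0"
  by (rule module_hom.zero[OF module_hom_L])

lemma funpow_L_zero [simp]: "(L ^^ k) 0 = 0"
  by (rule module_hom.zero[OF module_hom_funpow])

lemma funpow_L_closed: "L ` W \<subseteq> W \<Longrightarrow> x \<in> W \<Longrightarrow> (L ^^ k) x \<in> W"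
  by (induction k) auto

lemma funpow_L_vanish_mono:
  assumes "(L ^^ k) v = 0" "k \<le> m"
  shows "(L ^^ m) v = 0"
proof -
  have "(L ^^ m) v = (L ^^ (m - k + k)) v" using assms(2) by simp
  also have "\<dots> = (L ^^ (m - k)) ((L ^^ k) v)" by (simp add: funpow_add)
  finally show ?thesis using assms(1) by simp
qed

definition string_index :: "('b \<times> nat) list \<Rightarrow> (nat \<times> nat) set" where
  "string_index js = (SIGMA j:{..<length js}. {..<snd (js ! j)})"

definition string_vec :: "('b \<times> nat) list \<Rightarrow> nat \<times> nat \<Rightarrow> 'b" where
  "string_vec js = (\<lambda>(j, t). (L ^^ t) (fst (js ! j)))"

definition jordan_basis :: "'b set \<Rightarrow> ('b \<times> nat) list \<Rightarrow> bool" where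
  "jordan_basis W js \<longleftrightarrow> (\<forall>(v, k)\<in>set js. 1 \<le> k \<and> (L ^^ k) v = 0)
     \<and> fam_basis W (string_vec js) (string_index js)"

definition string_end :: "('b \<times> nat) list \<Rightarrow> nat \<Rightarrow> 'b" where
  "string_end js j = string_vec js (j, snd (js ! j) - 1)"

definition string_ends :: "('b \<times> nat) list \<Rightarrow> 'b set" where
  "string_ends js = string_end js ` {..<length js}"

lemma string_index_iff [simp]: "(j, t) \<in> string_index js \<longleftrightarrow> j < length js \<and> t < snd (js ! j)"
  by (simp add: string_index_def)

lemma string_vec_apply [simp]: "string_vec js (j, t) = (L ^^ t) (fst (js ! j))"
  by (simp add: string_vec_def)

lemma finite_string_index [simp]: "finite (string_index js)"
  by (simp add: string_index_def)

lemma jordan_basisD: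
  assumes "jordan_basis W js" "j < length js"
  shows "1 \<le> snd (js ! j)" "(L ^^ snd (js ! j)) (fst (js ! j)) = 0"
proof -
  have "js ! j \<in> set js" using assms(2) by simp
  thus "1 \<le> snd (js ! j)" "(L ^^ snd (js ! j)) (fst (js ! j)) = 0"
    using assms(1) unfolding jordan_basis_def by (auto simp: case_prod_beta)
qed

lemma jordan_basis_fam_basis: "jordan_basis W js \<Longrightarrow> fam_basis W (string_vec js) (string_index js)"
  by (simp add: jordan_basis_def)

lemma jordan_basis_string_vec_in:
  "jordan_basis W js \<Longrightarrow> ij \<in> string_index js \<Longrightarrow> string_vec js ij \<in> W"
  by (auto simp: jordan_basis_def fam_basis_def)

lemma jordan_basis_start_in:
  assumes "jordan_basis W js" "j < length js"
  shows "fst (js ! j) \<in> W"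
  using jordan_basis_string_vec_in[OF assms(1), of "(j, 0)"] jordan_basisD(1)[OF assms] assms(2)
  by simp

lemma image_funpow_subset_span:
  assumes "jordan_basis W js"
  shows "(L ^^ i) ` W \<subseteq> span (string_vec js ` (SIGMA j:{..<length js}. {i..<snd (js ! j)}))"
    (is "_ \<subseteq> span (string_vec js ` ?I)")
proof -
  have "(L ^^ i) ` string_vec js ` string_index js \<subseteq> span (string_vec js ` ?I)"
  proof
    fix y assume "y \<in> (L ^^ i) ` string_vec js ` string_index js"
    then obtain j t where jt: "j < length js" "t < snd (js ! j)"
      and y: "y = (L ^^ (i + t)) (fst (js ! j))"
      by (auto simp: funpow_add)
    show "y \<in> span (string_vec js ` ?I)"
    proof (cases "i + t < snd (js ! j)")
      case True
      hence "(j, i + t) \<in> ?I" using jt by simp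
      hence "string_vec js (j, i + t) \<in> string_vec js ` ?I" by (rule imageI)
      thus ?thesis using y by (simp add: span_base)
    next
      case False
      thus ?thesis using y funpow_L_vanish_mono[OF jordan_basisD(2)[OF assms jt(1)]]
        by (simp add: span_zero)
    qed
  qed
  hence "span ((L ^^ i) ` string_vec js ` string_index js) \<subseteq> span (string_vec js ` ?I)"
    by (simp add: span_minimal)
  moreover have "(L ^^ i) ` W \<subseteq> span ((L ^^ i) ` string_vec js ` string_index js)"
    using assms by (intro module_hom.spans_image[OF module_hom_funpow])
      (simp add: jordan_basis_def fam_basis_def)
  ultimately show ?thesis by (rule order_trans[rotated])
qed

lemma fam_basis_image_funpow:
  assumes "jordan_basis W js"
  shows "fam_basis ((L ^^ i) ` W) (string_vec js) (SIGMA j:{..<length js}. {i..<snd (js ! j)})"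
    (is "fam_basis _ _ ?I")
  unfolding fam_basis_def
proof (intro conjI)
  show "finite ?I" by simp
  have "?I \<subseteq> string_index js" by auto
  moreover have "fam_independent (string_vec js) (string_index js)"
    using assms by (simp add: jordan_basis_def fam_basis_def)
  ultimately show "fam_independent (string_vec js) ?I"
    using fam_independent_subset[OF _ finite_string_index] by blast
  show "string_vec js ` ?I \<subseteq> (L ^^ i) ` W"
  proof
    fix x assume "x \<in> string_vec js ` ?I"
    then obtain j t where jt: "j < length js" "i \<le> t" "t < snd (js ! j)"
      and x: "x = (L ^^ (i + (t - i))) (fst (js ! j))"
      by auto
    have "string_vec js (j, t - i) \<in> W"
      using jordan_basis_string_vec_in[OF assms, of "(j, t - i)"] jt by simp
    moreover have "x = (L ^^ i) (string_vec js (j, t - i))" using x by (simp add: funpow_add)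
    ultimately show "x \<in> (L ^^ i) ` W" by blast
  qed
  show "(L ^^ i) ` W \<subseteq> span (string_vec js ` ?I)" by (rule image_funpow_subset_span[OF assms])
qed

lemma jordan_basis_rank:
  assumes "jordan_basis W js"
  shows "dim ((L ^^ i) ` W) = (\<Sum>k\<in>#mset (map snd js). k - i)"
proof -
  have "dim ((L ^^ i) ` W) = card (SIGMA j:{..<length js}. {i..<snd (js ! j)})"
    by (rule fam_basis_dim[OF fam_basis_image_funpow[OF assms]])
  also have "\<dots> = (\<Sum>j<length js. snd (js ! j) - i)" by simp
  also have "\<dots> = sum_list (map (\<lambda>k. k - i) (map snd js))"
    by (simp add: sum_list_sum_nth atLeast0LessThan)
  also have "\<dots> = (\<Sum>k\<in>#mset (map snd js). k - i)"
    by (metis mset_map sum_mset_sum_list)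
  finally show ?thesis .
qed

text \<open>With truncated subtraction, \<open>(k - i) + (k - (i + 2)) - 2 (k - (i + 1))\<close> is \<open>1\<close>
  for \<open>k = i + 1\<close> and \<open>0\<close> otherwise.\<close>

lemma jordan_basis_count:
  assumes "jordan_basis W js"
  shows "int (count (mset (map snd js)) (Suc i))
    = int (dim ((L ^^ i) ` W)) + int (dim ((L ^^ (i + 2)) ` W)) - 2 * int (dim ((L ^^ (i + 1)) ` W))"
proof -
  define M where "M = mset (map snd js)"
  have rank: "int (dim ((L ^^ r) ` W)) = (\<Sum>k\<in>#M. int (k - r))" for r
    unfolding jordan_basis_rank[OF assms] M_def by (simp add: of_nat_sum_mset multiset.map_comp comp_def)
  have "(\<Sum>k\<in>#M. int (k - i)) + (\<Sum>k\<in>#M. int (k - (i + 2))) - 2 * (\<Sum>k\<in>#M. int (k - (i + 1)))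
      = (\<Sum>k\<in>#M. int (k - i) + int (k - (i + 2)) - 2 * int (k - (i + 1)))"
    by (induction M) (simp_all add: algebra_simps)
  also have "\<dots> = (\<Sum>k\<in>#M. if k = Suc i then 1 else 0)"
    by (intro arg_cong[where f = sum_mset] image_mset_cong) auto
  also have "\<dots> = int (count M (Suc i))" by (simp add: sum_mset_delta)
  finally show ?thesis unfolding rank M_def by simp
qed

lemma jordan_basis_length_pos:
  assumes "jordan_basis W js" "k \<in># mset (map snd js)"
  shows "1 \<le> k"
proof -
  obtain j where "j < length js" "k = snd (js ! j)"
    using assms(2) by (auto simp: in_set_conv_nth)
  thus ?thesis using jordan_basisD(1)[OF assms(1)] by simp
qed

lemma jordan_basis_length_le:
  assumes "jordan_basis W js" "\<forall>x\<in>W. (L ^^ m) x = 0" "k \<in># mset (map snd js)"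
  shows "k \<le> m"
proof (rule ccontr)
  assume "\<not> k \<le> m"
  obtain j where j: "j < length js" "k = snd (js ! j)"
    using assms(3) by (auto simp: in_set_conv_nth)
  have "(j, m) \<in> string_index js" using j \<open>\<not> k \<le> m\<close> by simp
  hence "string_vec js (j, m) \<noteq> 0"
    using assms(1) by (intro fam_independent_nonzero) (auto simp: jordan_basis_def fam_basis_def)
  thus False using assms(2) jordan_basis_start_in[OF assms(1) j(1)] by simp
qed

lemma jordan_basis_lengths_bounded:
  assumes "jordan_basis W js" "\<forall>x\<in>W. (L ^^ m) x = 0"
  shows "set_mset (mset (map snd js)) \<subseteq> {1..m}"
proof
  fix k assume "k \<in># mset (map snd js)"
  thus "k \<in> {1..m}" using jordan_basis_length_pos[OF assms(1)] jordan_basis_length_le[OF assms]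
    by simp
qed

lemma jordan_basis_lengths_unique:
  assumes "jordan_basis W js" "jordan_basis W js'"
  shows "mset (map snd js) = mset (map snd js')"
proof (rule multiset_eqI)
  fix k show "count (mset (map snd js)) k = count (mset (map snd js')) k"
  proof (cases k)
    case 0
    thus ?thesis using jordan_basis_length_pos[OF assms(1)] jordan_basis_length_pos[OF assms(2)]
      by (metis count_inI not_one_le_zero)
  next
    case (Suc i)
    thus ?thesis using jordan_basis_count[OF assms(1), of i] jordan_basis_count[OF assms(2), of i] by simp
  qed
qed

lemma string_ends_subset_kernel:
  assumes "jordan_basis W js"
  shows "string_ends js \<subseteq> {x \<in> W. L x = 0}"
proof
  fix x assume "x \<in> string_ends js"
  then obtain j where j: "j < length js" and x: "x = string_vec js (j, snd (js ! j) - 1)"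
    by (auto simp: string_ends_def string_end_def)
  have k: "1 \<le> snd (js ! j)" "(L ^^ snd (js ! j)) (fst (js ! j)) = 0"
    using jordan_basisD[OF assms j] by auto
  have "x \<in> W" using jordan_basis_string_vec_in[OF assms, of "(j, snd (js ! j) - 1)"] j k x by simp
  moreover have "L x = (L ^^ (Suc (snd (js ! j) - 1))) (fst (js ! j))" using x by simp
  hence "L x = 0" using k by simp
  ultimately show "x \<in> {x \<in> W. L x = 0}" by simp
qed

lemma independent_string_ends:
  assumes "jordan_basis W js"
  shows "independent (string_ends js)"
proof (rule independent_mono)
  have "fam_independent (string_vec js) (string_index js)"
    using assms by (simp add: jordan_basis_def fam_basis_def)
  thus "independent (string_vec js ` string_index js)"
    using fam_independent_iff[OF finite_string_index] by blast
  show "string_ends js \<subseteq> string_vec js ` string_index js"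
  proof
    fix x assume "x \<in> string_ends js"
    then obtain j where j: "j < length js" and x: "x = string_vec js (j, snd (js ! j) - 1)"
      by (auto simp: string_ends_def string_end_def)
    have "(j, snd (js ! j) - 1) \<in> string_index js" using jordan_basisD(1)[OF assms j] j by simp
    thus "x \<in> string_vec js ` string_index js" using x by blast
  qed
qed

lemma inj_on_string_end:
  assumes "jordan_basis W js"
  shows "inj_on (string_end js) {..<length js}"
proof (rule inj_onI)
  fix j1 j2 assume j1: "j1 \<in> {..<length js}" and j2: "j2 \<in> {..<length js}"
    and eq: "string_end js j1 = string_end js j2"
  have "inj_on (string_vec js) (string_index js)"
    using assms fam_independent_inj_on[OF finite_string_index] by (simp add: jordan_basis_def fam_basis_def)
  moreover have "(j, snd (js ! j) - 1) \<in> string_index js" if "j \<in> {..<length js}" for j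
    using that jordan_basisD(1)[OF assms, of j] by simp
  ultimately have "(j1, snd (js ! j1) - 1) = (j2, snd (js ! j2) - 1)"
    using eq j1 j2 unfolding string_end_def by (blast dest: inj_onD)
  thus "j1 = j2" by simp
qed

text \<open>The inductive step of the existence of Jordan bases: lengthen by one the strings
  of a Jordan basis of \<open>L ` W\<close>, by prepending preimages \<open>w j\<close> of their starts, and
  complete their ends to a basis of the kernel by strings \<open>(z, 1)\<close>.\<close>

definition extend_strings :: "('b \<times> nat) list \<Rightarrow> (nat \<Rightarrow> 'b) \<Rightarrow> 'b list \<Rightarrow> ('b \<times> nat) list" where
  "extend_strings js w zs =
     map (\<lambda>j. (w j, Suc (snd (js ! j)))) [0..<length js] @ map (\<lambda>z. (z, 1)) zs"

lemma length_extend_strings [simp]: "length (extend_strings js w zs) = length js + length zs"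
  by (simp add: extend_strings_def)

lemma nth_extend_strings_start [simp]:
  "j < length js \<Longrightarrow> extend_strings js w zs ! j = (w j, Suc (snd (js ! j)))"
  by (simp add: extend_strings_def nth_append)

lemma nth_extend_strings_kernel [simp]:
  "length js \<le> j \<Longrightarrow> j < length js + length zs \<Longrightarrow>
     extend_strings js w zs ! j = (zs ! (j - length js), 1)"
  by (simp add: extend_strings_def nth_append)

lemma new_string_index_extend_strings_iff:
  "(j, t) \<in> string_index (extend_strings js w zs) - string_index js \<longleftrightarrow>
     (j < length js \<and> t = snd (js ! j)) \<or> (length js \<le> j \<and> j < length js + length zs \<and> t = 0)"
  by (cases "j < length js") auto

lemma string_index_subset_extend_strings: "string_index js \<subseteq> string_index (extend_strings js w zs)"
  by auto

context
  fixes W :: "'b set" and js :: "('b \<times> nat) list" and w :: "nat \<Rightarrow> 'b" and zs :: "'b list"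
  assumes subspace_W: "subspace W" and L_W: "L ` W \<subseteq> W"
    and jordan_image: "jordan_basis (L ` W) js"
    and lift: "\<And>j. j < length js \<Longrightarrow> w j \<in> W \<and> L (w j) = fst (js ! j)"
    and zs_kernel: "set zs \<subseteq> {x \<in> W. L x = 0}" and distinct_zs: "distinct zs"
    and ends_zs_disjoint: "string_ends js \<inter> set zs = {}"
    and ends_zs_independent: "independent (string_ends js \<union> set zs)"
    and kernel_spanned: "{x \<in> W. L x = 0} \<subseteq> span (string_ends js \<union> set zs)"
begin

lemma extend_strings_kernel_nth: "i < length zs \<Longrightarrow> zs ! i \<in> W \<and> L (zs ! i) = 0"
  using zs_kernel nth_mem[of i zs] by blast

lemma string_vec_extend_strings_in:
  assumes "ij \<in> string_index (extend_strings js w zs)"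
  shows "string_vec (extend_strings js w zs) ij \<in> W"
proof -
  obtain j t where ij: "ij = (j, t)" by force
  show ?thesis
  proof (cases "j < length js")
    case True
    thus ?thesis using funpow_L_closed[OF L_W] lift ij by simp
  next
    case False
    hence "t = 0" "j - length js < length zs" using assms ij False by auto
    thus ?thesis using extend_strings_kernel_nth False ij by auto
  qed
qed

lemma L_string_vec_extend_strings:
  assumes "ij \<in> string_index (extend_strings js w zs)"
  shows "L (string_vec (extend_strings js w zs) ij) =
    (if ij \<in> string_index js then string_vec js ij else 0)"
proof -
  obtain j t where ij: "ij = (j, t)" by force
  show ?thesis
  proof (cases "j < length js")
    case True
    have "L (string_vec (extend_strings js w zs) ij) = (L ^^ t) (L (w j))"
      using True ij by (simp add: funpow_swap1)
    also have "\<dots> = string_vec js (j, t)" using lift[OF True] by simp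
    also have "\<dots> = (if ij \<in> string_index js then string_vec js ij else 0)"
    proof (cases "t < snd (js ! j)")
      case False
      hence "t = snd (js ! j)" using assms ij True by simp
      thus ?thesis using jordan_basisD(2)[OF jordan_image True] ij by simp
    qed (use ij True in simp)
    finally show ?thesis .
  next
    case False
    hence "t = 0" "j - length js < length zs" using assms ij False by auto
    thus ?thesis using extend_strings_kernel_nth False ij by auto
  qed
qed

lemma string_vec_extend_strings_new:
  assumes "(j, t) \<in> string_index (extend_strings js w zs) - string_index js"
  shows "string_vec (extend_strings js w zs) (j, t) =
    (if j < length js then string_end js j else zs ! (j - length js))"
proof (cases "j < length js")
  case True
  hence t: "t = Suc (snd (js ! j) - 1)"
    using assms jordan_basisD(1)[OF jordan_image True] by auto
  have "string_vec (extend_strings js w zs) (j, t) = (L ^^ (snd (js ! j) - 1)) (L (w j))"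
    using True by (simp add: t funpow_swap1)
  thus ?thesis using lift[OF True] True by (simp add: string_end_def)
next
  case False
  thus ?thesis using assms by auto
qed

lemma image_string_vec_extend_strings_new:
  "string_vec (extend_strings js w zs) ` (string_index (extend_strings js w zs) - string_index js)
     = string_ends js \<union> set zs"
  (is "?v ` ?R = _")
proof (intro equalityI subsetI)
  fix x assume "x \<in> ?v ` ?R"
  then obtain ij where ij: "ij \<in> ?R" "x = ?v ij" by (rule imageE)
  obtain j t where "ij = (j, t)" by force
  hence jt: "(j, t) \<in> ?R" and x: "x = ?v (j, t)" using ij by simp_all
  show "x \<in> string_ends js \<union> set zs"
  proof (cases "j < length js")
    case True
    thus ?thesis using x string_vec_extend_strings_new[OF jt] by (simp add: string_ends_def)
  next
    case False
    hence "j - length js < length zs"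
      using jt unfolding new_string_index_extend_strings_iff by arith
    thus ?thesis using x string_vec_extend_strings_new[OF jt] False by simp
  qed
next
  fix x assume "x \<in> string_ends js \<union> set zs"
  then consider j where "j < length js" "x = string_end js j"
    | i where "i < length zs" "x = zs ! i"
    by (auto simp: string_ends_def in_set_conv_nth)
  thus "x \<in> ?v ` ?R"
  proof cases
    case (1 j)
    hence R: "(j, snd (js ! j)) \<in> ?R" unfolding new_string_index_extend_strings_iff by simp
    hence "x = ?v (j, snd (js ! j))" using 1 by (simp only: string_vec_extend_strings_new if_True)
    thus ?thesis using R by (rule image_eqI)
  next
    case (2 i)
    hence R: "(length js + i, 0) \<in> ?R" unfolding new_string_index_extend_strings_iff by simp
    have "x = ?v (length js + i, 0)" using 2 string_vec_extend_strings_new[OF R] by simp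
    thus ?thesis using R by (rule image_eqI)
  qed
qed

lemma inj_on_string_vec_extend_strings_new:
  "inj_on (string_vec (extend_strings js w zs))
     (string_index (extend_strings js w zs) - string_index js)"
  (is "inj_on ?v ?R")
proof (rule inj_onI)
  fix a b assume a: "a \<in> ?R" and b: "b \<in> ?R" and eq: "?v a = ?v b"
  obtain j1 t1 j2 t2 where ab: "a = (j1, t1)" "b = (j2, t2)" by force
  have a': "(j1, t1) \<in> ?R" and b': "(j2, t2) \<in> ?R" using a b ab by simp_all
  have start: "t = snd (js ! j)" if "(j, t) \<in> ?R" "j < length js" for j t
    using that unfolding new_string_index_extend_strings_iff by simp
  have kernel: "t = 0 \<and> j - length js < length zs" if "(j, t) \<in> ?R" "\<not> j < length js" for j t
    using that unfolding new_string_index_extend_strings_iff by arith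
  have end_in: "string_end js j \<in> string_ends js" if "j < length js" for j
    using that by (simp add: string_ends_def)
  have eq': "(if j1 < length js then string_end js j1 else zs ! (j1 - length js)) =
      (if j2 < length js then string_end js j2 else zs ! (j2 - length js))"
    using eq string_vec_extend_strings_new[OF a'] string_vec_extend_strings_new[OF b'] ab
    by (simp del: string_vec_apply)
  consider "j1 < length js" "j2 < length js" | "j1 < length js" "\<not> j2 < length js"
    | "\<not> j1 < length js" "j2 < length js" | "\<not> j1 < length js" "\<not> j2 < length js"
    by blast
  thus "a = b"
  proof cases
    case 1
    hence "j1 = j2" using eq' inj_onD[OF inj_on_string_end[OF jordan_image]] by simp
    thus ?thesis using start[OF a' 1(1)] start[OF b' 1(2)] ab by simp
  next
    case 2
    hence "string_end js j1 \<in> string_ends js \<inter> set zs"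
      using eq' end_in[OF 2(1)] kernel[OF b' 2(2)] by simp
    thus ?thesis using ends_zs_disjoint by simp
  next
    case 3
    hence "string_end js j2 = zs ! (j1 - length js)" using eq' by simp
    hence "string_end js j2 \<in> string_ends js \<inter> set zs"
      using end_in[OF 3(2)] kernel[OF a' 3(1)] by simp
    thus ?thesis using ends_zs_disjoint by simp
  next
    case 4
    hence "j1 - length js = j2 - length js"
      using eq' kernel[OF a' 4(1)] kernel[OF b' 4(2)] distinct_zs by (simp add: nth_eq_iff_index_eq)
    thus ?thesis using kernel[OF a' 4(1)] kernel[OF b' 4(2)] ab 4 by simp
  qed
qed

lemma fam_independent_extend_strings:
  "fam_independent (string_vec (extend_strings js w zs)) (string_index (extend_strings js w zs))"
  (is "fam_independent ?v ?I")
  unfolding fam_independent_def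
proof (intro allI impI)
  fix c assume sum0: "(\<Sum>ij\<in>?I. c ij *s ?v ij) = 0"
  have "L (\<Sum>ij\<in>?I. c ij *s ?v ij) = (\<Sum>ij\<in>?I. c ij *s L (?v ij))"
    by (simp add: L_sum L_scale)
  also have "\<dots> = (\<Sum>ij\<in>string_index js. c ij *s string_vec js ij)"
  proof (rule sum.mono_neutral_cong_right)
    show "\<forall>ij\<in>?I - string_index js. c ij *s L (?v ij) = 0"
      using L_string_vec_extend_strings by (simp del: string_vec_apply string_index_iff)
    show "c ij *s L (?v ij) = c ij *s string_vec js ij" if "ij \<in> string_index js" for ij
      using that L_string_vec_extend_strings subsetD[OF string_index_subset_extend_strings that]
      by (simp del: string_vec_apply string_index_iff)
  qed (use string_index_subset_extend_strings in simp_all)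
  finally have old0: "(\<Sum>ij\<in>string_index js. c ij *s string_vec js ij) = 0"
    using sum0 by simp
  have "fam_independent (string_vec js) (string_index js)"
    using jordan_image by (simp add: jordan_basis_def fam_basis_def)
  hence old: "c ij = 0" if "ij \<in> string_index js" for ij
    using fam_independentD[OF _ old0 that] by blast
  have "(\<Sum>ij\<in>?I. c ij *s ?v ij) = (\<Sum>ij\<in>?I - string_index js. c ij *s ?v ij)
      + (\<Sum>ij\<in>string_index js. c ij *s ?v ij)"
    by (rule sum.subset_diff[OF string_index_subset_extend_strings finite_string_index])
  hence new0: "(\<Sum>ij\<in>?I - string_index js. c ij *s ?v ij) = 0"
    using sum0 old by (simp del: string_vec_apply string_index_iff)
  have "fam_independent ?v (?I - string_index js)"
    unfolding fam_independent_iff[OF finite_Diff[OF finite_string_index]]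
    using inj_on_string_vec_extend_strings_new image_string_vec_extend_strings_new ends_zs_independent
    by simp
  hence new: "c ij = 0" if "ij \<in> ?I - string_index js" for ij
    using fam_independentD[OF _ new0 that] by blast
  show "\<forall>ij\<in>?I. c ij = 0" using old new by blast
qed

lemma span_extend_strings:
  "W \<subseteq> span (string_vec (extend_strings js w zs) ` string_index (extend_strings js w zs))"
  (is "W \<subseteq> span (?v ` ?I)")
proof
  fix x assume x: "x \<in> W"
  have inj_js: "inj_on (string_vec js) (string_index js)"
    using jordan_image fam_independent_inj_on[OF finite_string_index]
    by (simp add: jordan_basis_def fam_basis_def)
  have "L x \<in> span (string_vec js ` string_index js)"
    using x jordan_image by (auto simp: jordan_basis_def fam_basis_def)
  then obtain c where c: "L x = (\<Sum>ij\<in>string_index js. c ij *s string_vec js ij)"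
    using span_image_fam_coeffs[OF finite_string_index inj_js] by blast
  define s where "s = (\<Sum>ij\<in>string_index js. c ij *s ?v ij)"
  have old_in: "ij \<in> ?I" if "ij \<in> string_index js" for ij
    using that string_index_subset_extend_strings by blast
  have "s \<in> span (?v ` ?I)"
    unfolding s_def using old_in by (intro span_sum span_scale span_base) simp
  have "s \<in> W"
    unfolding s_def using old_in string_vec_extend_strings_in
    by (intro subspace_sum[OF subspace_W] subspace_scale[OF subspace_W]) simp
  have "L s = (\<Sum>ij\<in>string_index js. c ij *s L (?v ij))"
    by (simp add: s_def L_sum L_scale del: string_vec_apply)
  also have "\<dots> = L x"
    unfolding c using old_in L_string_vec_extend_strings
    by (intro sum.cong) (simp_all del: string_vec_apply string_index_iff)
  finally have "x - s \<in> {x \<in> W. L x = 0}"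
    using subspace_diff[OF subspace_W x \<open>s \<in> W\<close>] by (simp add: L_diff)
  hence "x - s \<in> span (?v ` (?I - string_index js))"
    using kernel_spanned image_string_vec_extend_strings_new by auto
  hence "x - s \<in> span (?v ` ?I)" by (rule subsetD[OF span_mono, rotated]) auto
  hence "s + (x - s) \<in> span (?v ` ?I)" using \<open>s \<in> span (?v ` ?I)\<close> by (intro span_add)
  thus "x \<in> span (?v ` ?I)" by simp
qed

lemma jordan_basis_extend_strings: "jordan_basis W (extend_strings js w zs)"
  unfolding jordan_basis_def fam_basis_def
proof (intro conjI)
  show "\<forall>(v, k)\<in>set (extend_strings js w zs). 1 \<le> k \<and> (L ^^ k) v = 0"
  proof
    fix vk assume "vk \<in> set (extend_strings js w zs)"
    then obtain j where j: "j < length js + length zs" "vk = extend_strings js w zs ! j"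
      by (auto simp: in_set_conv_nth)
    show "case vk of (v, k) \<Rightarrow> 1 \<le> k \<and> (L ^^ k) v = 0"
    proof (cases "j < length js")
      case True
      have "(L ^^ Suc (snd (js ! j))) (w j) = (L ^^ snd (js ! j)) (L (w j))"
        by (simp add: funpow_swap1)
      thus ?thesis using j True lift jordan_basisD(2)[OF jordan_image True] by simp
    next
      case False
      thus ?thesis using j extend_strings_kernel_nth[of "j - length js"] by simp
    qed
  qed
  show "string_vec (extend_strings js w zs) ` string_index (extend_strings js w zs) \<subseteq> W"
    using string_vec_extend_strings_in by blast
qed (simp_all add: fam_independent_extend_strings span_extend_strings)

end

lemma jordan_basis_lift:
  assumes "subspace W" "L ` W \<subseteq> W" "finite T" "W \<subseteq> span T" "jordan_basis (L ` W) js"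
  shows "\<exists>js'. jordan_basis W js'"
proof -
  have "\<forall>j\<in>{..<length js}. \<exists>x. x \<in> W \<and> L x = fst (js ! j)"
  proof
    fix j assume "j \<in> {..<length js}"
    hence "fst (js ! j) \<in> L ` W" using jordan_basis_start_in[OF assms(5)] by simp
    thus "\<exists>x. x \<in> W \<and> L x = fst (js ! j)" by auto
  qed
  from bchoice[OF this] obtain w where w: "\<forall>j\<in>{..<length js}. w j \<in> W \<and> L (w j) = fst (js ! j)" ..
  define K where "K = {x \<in> W. L x = 0}"
  have ends_K: "string_ends js \<subseteq> K"
    using string_ends_subset_kernel[OF assms(5)] assms(2) by (auto simp: K_def)
  obtain B where B: "string_ends js \<subseteq> B" "B \<subseteq> K" "independent B" "K \<subseteq> span B"
    using maximal_independent_subset_extend[OF ends_K independent_string_ends[OF assms(5)]] by blast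
  have "B \<subseteq> span T" using B(2) assms(4) by (auto simp: K_def)
  hence "finite B" using independent_span_bound[OF assms(3) B(3)] by blast
  then obtain zs where zs: "set zs = B - string_ends js" "distinct zs"
    using finite_distinct_list[of "B - string_ends js"] by blast
  have B_eq: "string_ends js \<union> set zs = B" using zs(1) B(1) by blast
  have "jordan_basis W (extend_strings js w zs)"
  proof (rule jordan_basis_extend_strings[OF assms(1,2,5) _ _ zs(2)])
    show "w j \<in> W \<and> L (w j) = fst (js ! j)" if "j < length js" for j using w that by blast
    show "set zs \<subseteq> {x \<in> W. L x = 0}" using zs(1) B(2) by (auto simp: K_def)
    show "string_ends js \<inter> set zs = {}" using zs(1) by blast
    show "independent (string_ends js \<union> set zs)" using B_eq B(3) by simp
    show "{x \<in> W. L x = 0} \<subseteq> span (string_ends js \<union> set zs)" using B_eq B(4) by (simp add: K_def)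
  qed
  thus ?thesis ..
qed

lemma jordan_basis_exists:
  assumes "subspace W" "L ` W \<subseteq> W" "finite T" "W \<subseteq> span T" "\<forall>x\<in>W. (L ^^ m) x = 0"
  shows "\<exists>js. jordan_basis W js"
  using assms
proof (induction m arbitrary: W T)
  case 0
  hence "W \<subseteq> {0}" by auto
  hence "jordan_basis W []"
    by (auto simp: jordan_basis_def fam_basis_def fam_independent_def string_index_def)
  thus ?case ..
next
  case (Suc m)
  have "subspace (L ` W)" by (rule module_hom.subspace_image[OF module_hom_L Suc.prems(1)])
  moreover have "L ` L ` W \<subseteq> L ` W" using Suc.prems(2) by blast
  moreover have "finite (L ` T)" using Suc.prems(3) by simp
  moreover have "L ` W \<subseteq> span (L ` T)" by (rule module_hom.spans_image[OF module_hom_L Suc.prems(4)])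
  moreover have "\<forall>x\<in>L ` W. (L ^^ m) x = 0" using Suc.prems(5) by (simp add: funpow_swap1)
  ultimately have "\<exists>js. jordan_basis (L ` W) js" by (rule Suc.IH)
  then obtain js where "jordan_basis (L ` W) js" ..
  thus ?case by (rule jordan_basis_lift[OF Suc.prems(1-4)])
qed

end

section \<open>Contraction\<close>

lemma smult_mp_eq: "smult_mp c p = Poly_Mapping.single 0 c * p"
  unfolding smult_mp_def mult_map_scale_conv_mult[symmetric] by (simp add: comp_def)

lemma single0_mult:
  "Poly_Mapping.single 0 (a * b) =
     Poly_Mapping.single 0 a * (Poly_Mapping.single 0 b :: 'a::comm_semiring_1 mpoly)"
  by (simp add: mult_single)

interpretation mp: vector_space "smult_mp :: 'a::field \<Rightarrow> 'a mpoly \<Rightarrow> 'a mpoly"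
  by unfold_locales (simp_all add: smult_mp_eq algebra_simps single_add single0_mult)

definition contract_term ::
    "('a::comm_semiring_1) mpoly \<Rightarrow> 'a mpoly \<Rightarrow> (nat \<Rightarrow>\<^sub>0 nat) \<Rightarrow> (nat \<Rightarrow>\<^sub>0 nat) \<Rightarrow> 'a mpoly" where
  "contract_term g F a b = (if mon_le a b then Poly_Mapping.single (b - a)
     (Poly_Mapping.lookup g a * Poly_Mapping.lookup F b * diff_coeff a b) else 0)"

lemma contract_eq_sum_contract_term:
  "g \<circ>\<^sub>D F = (\<Sum>a\<in>Poly_Mapping.keys g. \<Sum>b\<in>Poly_Mapping.keys F. contract_term g F a b)"
  unfolding contract_def contract_term_def ..

lemma contract_eq_sum_superset:
  assumes "finite A" "Poly_Mapping.keys g \<subseteq> A" "finite B" "Poly_Mapping.keys F \<subseteq> B"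
  shows "g \<circ>\<^sub>D F = (\<Sum>a\<in>A. \<Sum>b\<in>B. contract_term g F a b)"
proof -
  have z1: "contract_term g F a b = 0" if "a \<notin> Poly_Mapping.keys g" for a b
    using that by (simp add: contract_term_def not_in_keys_iff_lookup_eq_zero)
  have z2: "contract_term g F a b = 0" if "b \<notin> Poly_Mapping.keys F" for a b
    using that by (simp add: contract_term_def not_in_keys_iff_lookup_eq_zero)
  have "g \<circ>\<^sub>D F = (\<Sum>a\<in>Poly_Mapping.keys g. \<Sum>b\<in>B. contract_term g F a b)"
    unfolding contract_eq_sum_contract_term
    by (rule sum.cong[OF refl], rule sum.mono_neutral_right[symmetric]) (use assms z2 in auto)
  also have "\<dots> = (\<Sum>a\<in>A. \<Sum>b\<in>B. contract_term g F a b)"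
    by (rule sum.mono_neutral_right[symmetric]) (use assms z1 in auto)
  finally show ?thesis .
qed

lemma contract_add_left: "((g1 + g2) \<circ>\<^sub>D F) = g1 \<circ>\<^sub>D F + g2 \<circ>\<^sub>D (F :: ('a::comm_semiring_1) mpoly)"
proof -
  let ?A = "Poly_Mapping.keys g1 \<union> Poly_Mapping.keys g2" and ?B = "Poly_Mapping.keys F"
  have "contract_term (g1 + g2) F a b = contract_term g1 F a b + contract_term g2 F a b" for a b
    by (simp add: contract_term_def lookup_add distrib_right single_add)
  moreover have "(g1 + g2) \<circ>\<^sub>D F = (\<Sum>a\<in>?A. \<Sum>b\<in>?B. contract_term (g1 + g2) F a b)"
    by (rule contract_eq_sum_superset) (use Poly_Mapping.keys_add[of g1 g2] in auto)
  moreover have "g1 \<circ>\<^sub>D F = (\<Sum>a\<in>?A. \<Sum>b\<in>?B. contract_term g1 F a b)"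
    by (rule contract_eq_sum_superset) auto
  moreover have "g2 \<circ>\<^sub>D F = (\<Sum>a\<in>?A. \<Sum>b\<in>?B. contract_term g2 F a b)"
    by (rule contract_eq_sum_superset) auto
  ultimately show ?thesis by (simp add: sum.distrib)
qed

lemma contract_add_right: "g \<circ>\<^sub>D (F1 + F2) = g \<circ>\<^sub>D F1 + g \<circ>\<^sub>D (F2 :: ('a::comm_semiring_1) mpoly)"
proof -
  let ?B = "Poly_Mapping.keys F1 \<union> Poly_Mapping.keys F2" and ?A = "Poly_Mapping.keys g"
  have "contract_term g (F1 + F2) a b = contract_term g F1 a b + contract_term g F2 a b" for a b
    by (simp add: contract_term_def lookup_add distrib_right distrib_left single_add)
  moreover have "g \<circ>\<^sub>D (F1 + F2) = (\<Sum>a\<in>?A. \<Sum>b\<in>?B. contract_term g (F1 + F2) a b)"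
    by (rule contract_eq_sum_superset) (use Poly_Mapping.keys_add[of F1 F2] in auto)
  moreover have "g \<circ>\<^sub>D F1 = (\<Sum>a\<in>?A. \<Sum>b\<in>?B. contract_term g F1 a b)"
    by (rule contract_eq_sum_superset) auto
  moreover have "g \<circ>\<^sub>D F2 = (\<Sum>a\<in>?A. \<Sum>b\<in>?B. contract_term g F2 a b)"
    by (rule contract_eq_sum_superset) auto
  ultimately show ?thesis by (simp add: sum.distrib)
qed

lemma contract_zero_left[simp]: "0 \<circ>\<^sub>D F = 0"
  by (simp add: contract_def)

lemma contract_zero_right[simp]: "g \<circ>\<^sub>D 0 = 0"
  by (simp add: contract_def)

lemma contract_sum_left: "(sum f I) \<circ>\<^sub>D (F :: ('a::comm_semiring_1) mpoly) = (\<Sum>i\<in>I. f i \<circ>\<^sub>D F)"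
  by (induction I rule: infinite_finite_induct) (simp_all add: contract_add_left)

lemma contract_sum_right: "g \<circ>\<^sub>D (sum f I) = (\<Sum>i\<in>I. g \<circ>\<^sub>D (f i :: ('a::comm_semiring_1) mpoly))"
  by (induction I rule: infinite_finite_induct) (simp_all add: contract_add_right)

lemma contract_single:
  "Poly_Mapping.single a x \<circ>\<^sub>D Poly_Mapping.single b y
   = (if mon_le a b then Poly_Mapping.single (b - a) (x * y * diff_coeff a b)
      else (0 :: ('a::comm_semiring_1) mpoly))"
proof -
  have "Poly_Mapping.single a x \<circ>\<^sub>D Poly_Mapping.single b y
     = (\<Sum>a'\<in>{a}. \<Sum>b'\<in>{b}. contract_term (Poly_Mapping.single a x) (Poly_Mapping.single b y) a' b')"
    by (rule contract_eq_sum_superset) auto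
  thus ?thesis by (simp add: contract_term_def)
qed

lemma sum_single_lookup:
  "(\<Sum>k\<in>Poly_Mapping.keys p. Poly_Mapping.single k (Poly_Mapping.lookup p k)) = p"
  by (rule poly_mapping_eqI)
     (auto simp: lookup_sum lookup_single when_def sum.delta not_in_keys_iff_lookup_eq_zero)

lemma mon_le_add_iff: "mon_le b m \<Longrightarrow> mon_le (a + b) m \<longleftrightarrow> mon_le a (m - b)"
  unfolding mon_le_def by (auto simp: lookup_add lookup_minus) (metis le_diff_conv2)+

lemma mon_le_addD: "mon_le (a + b) m \<Longrightarrow> mon_le b m"
  unfolding mon_le_def by (auto simp: lookup_add) (metis add_leE)

lemma diff_add_monomial: "m - (a + b) = m - b - (a :: nat \<Rightarrow>\<^sub>0 nat)"
  by (rule poly_mapping_eqI) (simp add: lookup_minus lookup_add)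

definition diff_coeff_nat :: "(nat \<Rightarrow>\<^sub>0 nat) \<Rightarrow> (nat \<Rightarrow>\<^sub>0 nat) \<Rightarrow> nat" where
  "diff_coeff_nat a b = (\<Prod>i\<in>Poly_Mapping.keys b.
     fact (Poly_Mapping.lookup b i) div fact (Poly_Mapping.lookup b i - Poly_Mapping.lookup a i))"

lemma diff_coeff_of_nat: "diff_coeff a b = of_nat (diff_coeff_nat a b)"
  by (simp add: diff_coeff_def diff_coeff_nat_def)

lemma diff_coeff_nat_superset:
  assumes "finite K" "Poly_Mapping.keys b \<subseteq> K"
  shows "diff_coeff_nat a b = (\<Prod>i\<in>K.
    fact (Poly_Mapping.lookup b i) div fact (Poly_Mapping.lookup b i - Poly_Mapping.lookup a i))"
  unfolding diff_coeff_nat_def using assms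
  by (intro prod.mono_neutral_right[symmetric]) (auto simp: not_in_keys_iff_lookup_eq_zero)

lemma fact_div_fact_diff_add:
  assumes "a + b \<le> (m :: nat)"
  shows "fact m div fact (m - (a + b)) =
    (fact m div fact (m - b)) * (fact (m - b) div (fact (m - b - a) :: nat))"
proof -
  obtain P :: nat where P: "fact m = fact (m - b) * P"
    using fact_dvd[OF diff_le_self[of m b]] by (auto elim: dvdE)
  obtain Q :: nat where Q: "fact (m - b) = fact (m - b - a) * Q"
    using fact_dvd[OF diff_le_self[of "m - b" a]] by (auto elim: dvdE)
  have "m - (a + b) = m - b - a" by simp
  thus ?thesis using P Q by (simp add: mult.assoc)
qed

lemma diff_coeff_nat_add:
  assumes "mon_le (a + b) m"
  shows "diff_coeff_nat (a + b) m = diff_coeff_nat b m * diff_coeff_nat a (m - b)"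
proof -
  let ?K = "Poly_Mapping.keys m"
  let ?f = "\<lambda>a b i.
    fact (Poly_Mapping.lookup b i) div fact (Poly_Mapping.lookup b i - Poly_Mapping.lookup a i)"
  have "Poly_Mapping.keys (m - b) \<subseteq> ?K" by (auto simp: in_keys_iff lookup_minus)
  hence "diff_coeff_nat b m * diff_coeff_nat a (m - b) = (\<Prod>i\<in>?K. ?f b m i * ?f a (m - b) i)"
    by (simp add: diff_coeff_nat_superset[of ?K] prod.distrib)
  also have "\<dots> = (\<Prod>i\<in>?K. ?f (a + b) m i)"
    using assms
    by (intro prod.cong) (simp_all add: mon_le_def lookup_add lookup_minus fact_div_fact_diff_add)
  also have "\<dots> = diff_coeff_nat (a + b) m" by (simp add: diff_coeff_nat_def)
  finally show ?thesis ..
qed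

lemma contract_single_assoc:
  "Poly_Mapping.single (a + b) (x * y) \<circ>\<^sub>D Poly_Mapping.single m z
   = Poly_Mapping.single a x \<circ>\<^sub>D
       (Poly_Mapping.single b y \<circ>\<^sub>D (Poly_Mapping.single m (z :: 'a::comm_semiring_1)))"
proof (cases "mon_le b m")
  case False
  hence "\<not> mon_le (a + b) m" using mon_le_addD by blast
  thus ?thesis using False by (simp add: contract_single)
next
  case True
  show ?thesis
  proof (cases "mon_le (a + b) m")
    case True2: True
    have "diff_coeff_nat (a + b) m = diff_coeff_nat b m * diff_coeff_nat a (m - b)"
      by (rule diff_coeff_nat_add[OF True2])
    thus ?thesis using True True2 mon_le_add_iff[OF True]
      by (simp add: contract_single diff_add_monomial diff_coeff_of_nat ac_simps)
  next
    case False
    thus ?thesis using True mon_le_add_iff[OF True] by (simp add: contract_single)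
  qed
qed

lemma contract_assoc: "(g * h) \<circ>\<^sub>D F = g \<circ>\<^sub>D (h \<circ>\<^sub>D (F :: ('a::comm_semiring_1) mpoly))"
proof -
  let ?s = "\<lambda>p k. Poly_Mapping.single k (Poly_Mapping.lookup p k)"
  let ?G = "\<Sum>a\<in>Poly_Mapping.keys g. ?s g a" and ?H = "\<Sum>b\<in>Poly_Mapping.keys h. ?s h b"
    and ?F = "\<Sum>m\<in>Poly_Mapping.keys F. ?s F m"
  have "(g * h) \<circ>\<^sub>D F = (?G * ?H) \<circ>\<^sub>D ?F" by (simp only: sum_single_lookup)
  also have "\<dots> = (\<Sum>a\<in>Poly_Mapping.keys g. \<Sum>b\<in>Poly_Mapping.keys h. \<Sum>m\<in>Poly_Mapping.keys F.
      Poly_Mapping.single (a + b) (Poly_Mapping.lookup g a * Poly_Mapping.lookup h b) \<circ>\<^sub>D ?s F m)"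
    by (simp only: sum_product mult_single contract_sum_left) (simp only: contract_sum_right)
  also have "\<dots> = (\<Sum>a\<in>Poly_Mapping.keys g. \<Sum>b\<in>Poly_Mapping.keys h. \<Sum>m\<in>Poly_Mapping.keys F.
      ?s g a \<circ>\<^sub>D (?s h b \<circ>\<^sub>D ?s F m))"
    by (simp only: contract_single_assoc)
  also have "\<dots> = (\<Sum>a\<in>Poly_Mapping.keys g. ?s g a \<circ>\<^sub>D (\<Sum>b\<in>Poly_Mapping.keys h. ?s h b \<circ>\<^sub>D ?F))"
    by (simp only: contract_sum_right)
  also have "\<dots> = ?G \<circ>\<^sub>D (?H \<circ>\<^sub>D ?F)" by (simp only: contract_sum_left)
  also have "\<dots> = g \<circ>\<^sub>D (h \<circ>\<^sub>D F)" by (simp only: sum_single_lookup)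
  finally show ?thesis .
qed

lemma mon_le_0[simp]: "mon_le 0 b" by (simp add: mon_le_def)

lemma diff_coeff_nat_0[simp]: "diff_coeff_nat 0 b = 1" by (simp add: diff_coeff_nat_def)

lemma contract_single0: "Poly_Mapping.single 0 c \<circ>\<^sub>D H = smult_mp c (H :: ('a::comm_semiring_1) mpoly)"
proof -
  let ?s = "\<lambda>m. Poly_Mapping.single m (Poly_Mapping.lookup H m)"
  have "Poly_Mapping.single 0 c \<circ>\<^sub>D H = Poly_Mapping.single 0 c \<circ>\<^sub>D (\<Sum>m\<in>Poly_Mapping.keys H. ?s m)"
    by (simp only: sum_single_lookup)
  also have "\<dots> = (\<Sum>m\<in>Poly_Mapping.keys H. Poly_Mapping.single 0 c * ?s m)"
    by (simp add: contract_sum_right contract_single diff_coeff_of_nat mult_single)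
  also have "\<dots> = Poly_Mapping.single 0 c * (\<Sum>m\<in>Poly_Mapping.keys H. ?s m)"
    by (simp add: sum_distrib_left)
  also have "\<dots> = smult_mp c H" by (simp only: sum_single_lookup smult_mp_eq)
  finally show ?thesis .
qed

lemma contract_one: "1 \<circ>\<^sub>D H = (H :: ('a::comm_semiring_1) mpoly)"
  using contract_single0[of 1 H] by (simp add: smult_mp_eq)

lemma contract_smult_left: "smult_mp c g \<circ>\<^sub>D F = smult_mp c (g \<circ>\<^sub>D (F :: ('a::comm_semiring_1) mpoly))"
  by (simp add: smult_mp_eq[of c g] contract_assoc contract_single0)

lemma contract_smult_right: "g \<circ>\<^sub>D smult_mp c F = smult_mp c (g \<circ>\<^sub>D (F :: ('a::comm_semiring_1) mpoly))"
proof -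
  have "g \<circ>\<^sub>D smult_mp c F = g \<circ>\<^sub>D (Poly_Mapping.single 0 c \<circ>\<^sub>D F)" by (simp add: contract_single0)
  also have "\<dots> = (Poly_Mapping.single 0 c * g) \<circ>\<^sub>D F" by (simp add: contract_assoc mult.commute)
  also have "\<dots> = smult_mp c (g \<circ>\<^sub>D F)" by (simp add: contract_assoc contract_single0)
  finally show ?thesis .
qed

lemma contract_diff_left: "(p - q) \<circ>\<^sub>D G = p \<circ>\<^sub>D G - q \<circ>\<^sub>D (G :: ('a::comm_ring_1) mpoly)"
proof -
  have "p \<circ>\<^sub>D G = ((p - q) + q) \<circ>\<^sub>D G" by simp
  also have "\<dots> = (p - q) \<circ>\<^sub>D G + q \<circ>\<^sub>D G" by (rule contract_add_left)
  finally show ?thesis by (simp add: eq_diff_eq)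
qed

lemma contract_comb:
  "(\<Sum>j\<in>J. smult_mp (c j) (B j)) \<circ>\<^sub>D G =
     (\<Sum>j\<in>J. smult_mp (c j) (B j \<circ>\<^sub>D (G :: ('a::comm_semiring_1) mpoly)))"
  unfolding contract_sum_left by (rule sum.cong[OF refl]) (rule contract_smult_left)

section \<open>Polynomials in \<open>n\<close> variables\<close>

lemma polys_iff: "p \<in> polys n \<longleftrightarrow> (\<forall>m\<in>Poly_Mapping.keys p. Poly_Mapping.keys m \<subseteq> {..<n})"
  by (simp add: polys_def poly_in_def)

lemma polys_keys_subset:
  "Poly_Mapping.keys p \<subseteq> Poly_Mapping.keys q \<union> Poly_Mapping.keys r \<Longrightarrow>
     q \<in> polys n \<Longrightarrow> r \<in> polys n \<Longrightarrow> p \<in> polys n"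
  unfolding polys_iff by blast

lemma polys_0[simp]: "0 \<in> polys n" by (simp add: polys_iff)

lemma polys_1 [simp]: "(1 :: ('a::comm_semiring_1) mpoly) \<in> polys n"
  by (simp add: polys_iff)

lemma polys_add: "p \<in> polys n \<Longrightarrow> q \<in> polys n \<Longrightarrow> p + q \<in> polys n"
  by (rule polys_keys_subset[OF Poly_Mapping.keys_add])

lemma polys_diff: "p \<in> polys n \<Longrightarrow> q \<in> polys n \<Longrightarrow> p - q \<in> polys n"
  by (rule polys_keys_subset[of _ p q]) (auto simp: in_keys_iff lookup_minus)

lemma polys_mult: "p \<in> polys n \<Longrightarrow> q \<in> polys n \<Longrightarrow> p * q \<in> polys n"
proof -
  assume p: "p \<in> polys n" and q: "q \<in> polys n"
  show ?thesis unfolding polys_iff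
  proof
    fix m assume "m \<in> Poly_Mapping.keys (p * q)"
    then obtain a b where ab: "a \<in> Poly_Mapping.keys p" "b \<in> Poly_Mapping.keys q" "m = a + b"
      using Poly_Mapping.keys_mult[of p q] by blast
    have "Poly_Mapping.keys m \<subseteq> Poly_Mapping.keys a \<union> Poly_Mapping.keys b"
      using ab(3) Poly_Mapping.keys_add[of a b] by simp
    thus "Poly_Mapping.keys m \<subseteq> {..<n}" using ab p q by (auto simp: polys_iff)
  qed
qed

lemma polys_pow: "(p :: ('a::comm_semiring_1) mpoly) \<in> polys n \<Longrightarrow> p ^ k \<in> polys n"
  by (induction k) (simp_all add: polys_mult)

lemma polys_single0: "Poly_Mapping.single 0 c \<in> polys n"
  by (simp add: polys_iff)

lemma polys_smult: "p \<in> polys n \<Longrightarrow> smult_mp c p \<in> polys n"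
  by (simp add: smult_mp_eq polys_mult polys_single0)

lemma polys_sum: "(\<And>j. j \<in> J \<Longrightarrow> f j \<in> polys n) \<Longrightarrow> sum f J \<in> polys n"
  by (induction J rule: infinite_finite_induct) (simp_all add: polys_add)

lemma polys_subspace: "mp.subspace (polys n :: ('a::field) mpoly set)"
  unfolding mp.subspace_def by (simp add: polys_add polys_smult)

lemma mdeg_superset: "finite K \<Longrightarrow> Poly_Mapping.keys m \<subseteq> K \<Longrightarrow> mdeg m = (\<Sum>i\<in>K. Poly_Mapping.lookup m i)"
  unfolding mdeg_def by (rule sum.mono_neutral_right[symmetric]) (auto simp: not_in_keys_iff_lookup_eq_zero)

lemma mdeg_add: "mdeg (a + b) = mdeg a + mdeg b"
proof -
  let ?K = "Poly_Mapping.keys a \<union> Poly_Mapping.keys b"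
  have "mdeg (a + b) = (\<Sum>i\<in>?K. Poly_Mapping.lookup (a + b) i)"
    by (rule mdeg_superset) (use Poly_Mapping.keys_add[of a b] in auto)
  moreover have "mdeg a = (\<Sum>i\<in>?K. Poly_Mapping.lookup a i)" by (rule mdeg_superset) auto
  moreover have "mdeg b = (\<Sum>i\<in>?K. Poly_Mapping.lookup b i)" by (rule mdeg_superset) auto
  ultimately show ?thesis by (simp add: lookup_add sum.distrib)
qed

lemma mdeg_mono: "mon_le a b \<Longrightarrow> mdeg a \<le> mdeg b"
proof -
  assume le: "mon_le a b"
  let ?K = "Poly_Mapping.keys a \<union> Poly_Mapping.keys b"
  have "mdeg a = (\<Sum>i\<in>?K. Poly_Mapping.lookup a i)" by (rule mdeg_superset) auto
  also have "\<dots> \<le> (\<Sum>i\<in>?K. Poly_Mapping.lookup b i)"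
    by (rule sum_mono) (use le in \<open>simp add: mon_le_def\<close>)
  also have "\<dots> = mdeg b" by (rule mdeg_superset[symmetric]) auto
  finally show ?thesis .
qed

lemma homogeneous_mult: "homogeneous i p \<Longrightarrow> homogeneous j q \<Longrightarrow> homogeneous (i + j) (p * q)"
  unfolding homogeneous_def
proof
  fix m assume p: "\<forall>m\<in>Poly_Mapping.keys p. mdeg m = i" and q: "\<forall>m\<in>Poly_Mapping.keys q. mdeg m = j"
    and m: "m \<in> Poly_Mapping.keys (p * q)"
  then obtain a b where ab: "a \<in> Poly_Mapping.keys p" "b \<in> Poly_Mapping.keys q" "m = a + b"
    using Poly_Mapping.keys_mult[of p q] by blast
  show "mdeg m = i + j" using ab p q by (simp add: mdeg_add)
qed

lemma homogeneous_pow: "homogeneous 1 l \<Longrightarrow> homogeneous k (l ^ k)"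
proof (induction k)
  case 0 thus ?case by (simp add: homogeneous_def mdeg_def)
next
  case (Suc k)
  thus ?case using homogeneous_mult[of 1 l k "l^k"] by simp
qed

lemma contract_eq_zero_if_degree_less:
  assumes "homogeneous i g" "homogeneous j F" "j < i"
  shows "g \<circ>\<^sub>D F = (0 :: ('a::comm_semiring_1) mpoly)"
  unfolding contract_eq_sum_contract_term
proof (intro sum.neutral ballI)
  fix a b assume a: "a \<in> Poly_Mapping.keys g" and b: "b \<in> Poly_Mapping.keys F"
  have "\<not> mon_le a b" using mdeg_mono[of a b] assms a b by (auto simp: homogeneous_def)
  thus "contract_term g F a b = 0" by (simp add: contract_term_def)
qed

section \<open>The space of derivatives\<close>

lemma finite_mon_le: "finite {m. mon_le m b}"
proof -
  let ?S = "{f. \<forall>x. (x \<in> Poly_Mapping.keys b \<longrightarrow> f x \<in> {..mdeg b}) \<and>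
    (x \<notin> Poly_Mapping.keys b \<longrightarrow> f x = (0::nat))}"
  have sub: "Poly_Mapping.lookup ` {m. mon_le m b} \<subseteq> ?S"
  proof
    fix f assume "f \<in> Poly_Mapping.lookup ` {m. mon_le m b}"
    then obtain m where m: "mon_le m b" "f = Poly_Mapping.lookup m" by blast
    have "f x \<le> mdeg b" if x: "x \<in> Poly_Mapping.keys b" for x
    proof -
      have h1: "Poly_Mapping.lookup m x \<le> Poly_Mapping.lookup b x" using m(1) by (simp add: mon_le_def)
      have h2: "Poly_Mapping.lookup b x \<le> mdeg b" unfolding mdeg_def by (rule member_le_sum) (use x in auto)
      show ?thesis using le_trans[OF h1 h2] m(2) by simp
    qed
    moreover have "f x = 0" if x: "x \<notin> Poly_Mapping.keys b" for x
    proof -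
      have "Poly_Mapping.lookup m x \<le> Poly_Mapping.lookup b x" using m(1) by (simp add: mon_le_def)
      thus ?thesis using x m(2) by (simp add: not_in_keys_iff_lookup_eq_zero)
    qed
    ultimately show "f \<in> ?S" by (simp only: mem_Collect_eq atMost_iff) blast
  qed
  have "finite ?S" by (rule finite_set_of_finite_funs) auto
  hence "finite (Poly_Mapping.lookup ` {m. mon_le m b})" using sub by (rule finite_subset[rotated])
  moreover have "inj_on Poly_Mapping.lookup {m. mon_le m b}"
    by (rule inj_onI, rule poly_mapping_eqI) simp
  ultimately show ?thesis by (rule finite_imageD)
qed

definition monomials_below :: "('a::zero) mpoly \<Rightarrow> (nat \<Rightarrow>\<^sub>0 nat) set" where
  "monomials_below F = (\<Union>b\<in>Poly_Mapping.keys F. {m. mon_le m b})"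

lemma finite_monomials_below: "finite (monomials_below F)"
  unfolding monomials_below_def by (auto intro: finite_mon_le)

lemma mon_le_diff: "mon_le (b - a) b"
  by (simp add: mon_le_def lookup_minus)

lemma keys_contract_subset: "Poly_Mapping.keys (g \<circ>\<^sub>D F) \<subseteq> monomials_below F"
  unfolding contract_eq_sum_contract_term
proof (rule subset_trans[OF Poly_Mapping.keys_sum], rule UN_least)
  fix a assume a: "a \<in> Poly_Mapping.keys g"
  show "Poly_Mapping.keys (\<Sum>b\<in>Poly_Mapping.keys F. contract_term g F a b) \<subseteq> monomials_below F"
  proof (rule subset_trans[OF Poly_Mapping.keys_sum], rule UN_least)
    fix b assume b: "b \<in> Poly_Mapping.keys F"
    have "b - a \<in> monomials_below F" unfolding monomials_below_def using b mon_le_diff[of b a] by blast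
    thus "Poly_Mapping.keys (contract_term g F a b) \<subseteq> monomials_below F" by (simp add: contract_term_def)
  qed
qed

lemma span_monomials:
  assumes "Poly_Mapping.keys (p :: ('a::field) mpoly) \<subseteq> M"
  shows "p \<in> mp.span ((\<lambda>m. Poly_Mapping.single m 1) ` M)"
proof -
  have "p = (\<Sum>k\<in>Poly_Mapping.keys p. smult_mp (Poly_Mapping.lookup p k) (Poly_Mapping.single k 1))"
  proof -
    have "(\<Sum>k\<in>Poly_Mapping.keys p. smult_mp (Poly_Mapping.lookup p k) (Poly_Mapping.single k 1))
        = (\<Sum>k\<in>Poly_Mapping.keys p. Poly_Mapping.single k (Poly_Mapping.lookup p k))"
      by (rule sum.cong) (simp_all add: smult_mp_def)
    thus ?thesis by (simp only: sum_single_lookup)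
  qed
  also have "\<dots> \<in> mp.span ((\<lambda>m. Poly_Mapping.single m 1) ` M)"
    by (rule mp.span_sum, rule mp.span_scale, rule mp.span_base) (use assms in auto)
  finally show ?thesis .
qed

definition derivatives :: "nat \<Rightarrow> ('a::comm_semiring_1) mpoly \<Rightarrow> 'a mpoly set" where
  "derivatives n G = (\<lambda>g. g \<circ>\<^sub>D G) ` polys n"

lemma derivatives_finite_span:
  "\<exists>T. finite T \<and> derivatives n G \<subseteq> mp.span T"
proof (intro exI conjI)
  show "finite ((\<lambda>m. Poly_Mapping.single m 1) ` monomials_below G)"
    by (simp add: finite_monomials_below)
  show "derivatives n G \<subseteq> mp.span ((\<lambda>m. Poly_Mapping.single m (1::'a)) ` monomials_below G)"
    using span_monomials[OF keys_contract_subset] by (auto simp: derivatives_def)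
qed

lemma subspace_derivatives: "mp.subspace (derivatives n (G :: ('a::field) mpoly))"
proof -
  have "module_hom smult_mp smult_mp (\<lambda>g. g \<circ>\<^sub>D G)"
    using mp.module_axioms by (simp add: module_hom_iff contract_add_left contract_smult_left)
  thus ?thesis unfolding derivatives_def by (rule module_hom.subspace_image[OF _ polys_subspace])
qed

lemma basis_mod_Ann_imp_fam_basis:
  fixes G :: "('a::field) mpoly"
  assumes "basis_mod (polys n) (Ann n G) B J"
  shows "mp.fam_basis (derivatives n G) (\<lambda>j. B j \<circ>\<^sub>D G) J"
proof -
  have fin: "finite J" and BV: "B ` J \<subseteq> polys n"
    and ind: "\<And>c. (\<Sum>j\<in>J. smult_mp (c j) (B j)) \<in> Ann n G \<Longrightarrow> (\<forall>j\<in>J. c j = 0)"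
    and sp: "\<And>p. p \<in> polys n \<Longrightarrow> \<exists>c. p - (\<Sum>j\<in>J. smult_mp (c j) (B j)) \<in> Ann n G"
    using assms unfolding basis_mod_def by blast+
  have comb: "(\<Sum>j\<in>J. smult_mp (c j) (B j)) \<in> polys n" for c
    using BV by (intro polys_sum polys_smult) auto
  show ?thesis
    unfolding mp.fam_basis_def
  proof (intro conjI)
    show "finite J" by (rule fin)
    show "(\<lambda>j. B j \<circ>\<^sub>D G) ` J \<subseteq> derivatives n G" using BV by (auto simp: derivatives_def)
    show "mp.fam_independent (\<lambda>j. B j \<circ>\<^sub>D G) J"
      unfolding mp.fam_independent_def
    proof (intro allI impI)
      fix c assume "(\<Sum>j\<in>J. smult_mp (c j) (B j \<circ>\<^sub>D G)) = 0"
      hence "(\<Sum>j\<in>J. smult_mp (c j) (B j)) \<in> Ann n G" using comb by (simp add: Ann_def contract_comb)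
      thus "\<forall>j\<in>J. c j = 0" by (rule ind)
    qed
    show "derivatives n G \<subseteq> mp.span ((\<lambda>j. B j \<circ>\<^sub>D G) ` J)"
    proof
      fix y assume "y \<in> derivatives n G"
      then obtain p where p: "p \<in> polys n" "y = p \<circ>\<^sub>D G" by (auto simp: derivatives_def)
      obtain c where "p - (\<Sum>j\<in>J. smult_mp (c j) (B j)) \<in> Ann n G" using sp[OF p(1)] by blast
      hence "y = (\<Sum>j\<in>J. smult_mp (c j) (B j \<circ>\<^sub>D G))"
        using p(2) by (simp add: Ann_def contract_diff_left contract_comb)
      also have "\<dots> \<in> mp.span ((\<lambda>j. B j \<circ>\<^sub>D G) ` J)"
        by (intro mp.span_sum mp.span_scale mp.span_base) auto
      finally show "y \<in> mp.span ((\<lambda>j. B j \<circ>\<^sub>D G) ` J)" .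
    qed
  qed
qed

lemma fam_basis_imp_basis_mod_Ann:
  fixes G :: "('a::field) mpoly"
  assumes BV: "B ` J \<subseteq> polys n" and fb: "mp.fam_basis (derivatives n G) (\<lambda>j. B j \<circ>\<^sub>D G) J"
  shows "basis_mod (polys n) (Ann n G) B J"
proof -
  have fin: "finite J" and ind: "mp.fam_independent (\<lambda>j. B j \<circ>\<^sub>D G) J"
    and spn: "derivatives n G \<subseteq> mp.span ((\<lambda>j. B j \<circ>\<^sub>D G) ` J)"
    using fb unfolding mp.fam_basis_def by blast+
  have comb: "(\<Sum>j\<in>J. smult_mp (c j) (B j)) \<in> polys n" for c
    using BV by (intro polys_sum polys_smult) auto
  show ?thesis
    unfolding basis_mod_def
  proof (intro conjI allI impI ballI)
    show "finite J" by (rule fin)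
    show "B ` J \<subseteq> polys n" by (rule BV)
    fix c j assume "(\<Sum>j\<in>J. smult_mp (c j) (B j)) \<in> Ann n G" and j: "j \<in> J"
    hence "(\<Sum>j\<in>J. smult_mp (c j) (B j \<circ>\<^sub>D G)) = 0" by (simp add: Ann_def contract_comb)
    thus "c j = 0" using mp.fam_independentD[OF ind _ j] by blast
  next
    fix p :: "'a mpoly" assume p: "p \<in> polys n"
    have "p \<circ>\<^sub>D G \<in> mp.span ((\<lambda>j. B j \<circ>\<^sub>D G) ` J)" using spn p by (auto simp: derivatives_def)
    then obtain c where c: "p \<circ>\<^sub>D G = (\<Sum>j\<in>J. smult_mp (c j) (B j \<circ>\<^sub>D G))"
      using mp.span_image_fam_coeffs[OF fin mp.fam_independent_inj_on[OF fin ind]] by blast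
    have "(p - (\<Sum>j\<in>J. smult_mp (c j) (B j))) \<circ>\<^sub>D G = 0"
      using c by (simp add: contract_diff_left contract_comb)
    thus "\<exists>c. p - (\<Sum>j\<in>J. smult_mp (c j) (B j)) \<in> Ann n G"
      using polys_diff[OF p comb] by (auto simp: Ann_def)
  qed
qed

lemma basis_mod_Ann_iff:
  "basis_mod (polys n) (Ann n G) B J \<longleftrightarrow>
     B ` J \<subseteq> polys n \<and> mp.fam_basis (derivatives n G) (\<lambda>j. B j \<circ>\<^sub>D G) J"
  for G :: "('a::field) mpoly"
proof
  assume "basis_mod (polys n) (Ann n G) B J"
  thus "B ` J \<subseteq> polys n \<and> mp.fam_basis (derivatives n G) (\<lambda>j. B j \<circ>\<^sub>D G) J"
    using basis_mod_Ann_imp_fam_basis by (simp add: basis_mod_def)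
qed (use fam_basis_imp_basis_mod_Ann in blast)

lemma ex_basis_mod_Ann:
  fixes G :: "('a::field) mpoly"
  shows "\<exists>B. basis_mod (polys n) (Ann n G) B {..<mp.dim (derivatives n G)}"
proof -
  let ?W = "derivatives n G"
  obtain Bs where Bs: "Bs \<subseteq> ?W" "mp.independent Bs" "?W \<subseteq> mp.span Bs" "card Bs = mp.dim ?W"
    using mp.basis_exists by blast
  have "finite Bs"
    using derivatives_finite_span mp.independent_span_bound Bs(1,2) by (metis subset_trans)
  then obtain e where e: "bij_betw e {..<mp.dim ?W} Bs"
    using ex_bij_betw_nat_finite Bs(4) by (metis atLeast0LessThan)
  have "e j \<in> ?W" if "j \<in> {..<mp.dim ?W}" for j
    using e Bs(1) that bij_betwE by blast
  hence "\<forall>j\<in>{..<mp.dim ?W}. \<exists>g. g \<in> polys n \<and> g \<circ>\<^sub>D G = e j"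
    unfolding derivatives_def by (metis imageE)
  from bchoice[OF this] obtain B where B: "\<forall>j\<in>{..<mp.dim ?W}. B j \<in> polys n \<and> B j \<circ>\<^sub>D G = e j" ..
  have "mp.fam_basis ?W e {..<mp.dim ?W}"
    using e Bs by (auto simp: mp.fam_basis_def mp.fam_independent_iff bij_betw_def)
  hence "mp.fam_basis ?W (\<lambda>j. B j \<circ>\<^sub>D G) {..<mp.dim ?W}"
    by (rule mp.fam_basis_cong) (use B in simp)
  thus ?thesis using B by (auto simp: basis_mod_Ann_iff)
qed

lemma qdim_Ann: "qdim (polys n) (Ann n G) = mp.dim (derivatives n G)"
  for G :: "('a::field) mpoly"
  unfolding qdim_def
proof (rule the_equality)
  show "\<exists>B. basis_mod (polys n) (Ann n G) B {..<mp.dim (derivatives n G)}"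
    by (rule ex_basis_mod_Ann)
next
  fix m assume "\<exists>B :: nat \<Rightarrow> 'a mpoly. basis_mod (polys n) (Ann n G) B {..<m}"
  then obtain B :: "nat \<Rightarrow> 'a mpoly" where "basis_mod (polys n) (Ann n G) B {..<m}" ..
  from mp.fam_basis_dim[OF basis_mod_Ann_imp_fam_basis[OF this]] show "m = mp.dim (derivatives n G)"
    by simp
qed

section \<open>Contraction by \<open>\<ell>\<close> on the derivatives of \<open>F\<close>\<close>

interpretation contraction: endomorphism smult_mp "\<lambda>x. l \<circ>\<^sub>D x" for l :: "('a::field) mpoly"
  by unfold_locales (simp_all add: contract_add_right contract_smult_right)

lemma funpow_contract: "((\<lambda>x. l \<circ>\<^sub>D x) ^^ t) x = l ^ t \<circ>\<^sub>D x"
  by (induction t) (simp_all add: contract_one contract_assoc)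

lemma image_funpow_contract_derivatives:
  "((\<lambda>x. l \<circ>\<^sub>D x) ^^ i) ` derivatives n F = derivatives n (l ^ i \<circ>\<^sub>D F)"
  by (simp add: derivatives_def image_image funpow_contract flip: contract_assoc)
     (simp add: mult.commute contract_assoc)

lemma contract_derivatives_subset:
  "l \<in> polys n \<Longrightarrow> (\<lambda>x. l \<circ>\<^sub>D x) ` derivatives n F \<subseteq> derivatives n F"
  by (auto simp: derivatives_def polys_mult simp flip: contract_assoc)

lemma derivatives_zero [simp]: "derivatives n 0 = {0}"
proof -
  have "polys n \<noteq> {}" using polys_0 by blast
  thus ?thesis by (simp add: derivatives_def image_constant_conv)
qed

lemma dimA_eq_rank:
  fixes F l :: "('a::field) mpoly"
  assumes "homogeneous d F" "homogeneous 1 l"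
  shows "dimA n d F l i = mp.dim (((\<lambda>x. l \<circ>\<^sub>D x) ^^ i) ` derivatives n F)"
proof (cases "i \<le> d")
  case True
  thus ?thesis by (simp add: dimA_def qdim_Ann image_funpow_contract_derivatives)
next
  case False
  hence "l ^ i \<circ>\<^sub>D F = 0"
    using contract_eq_zero_if_degree_less[OF homogeneous_pow[OF assms(2)] assms(1)] by simp
  moreover have "mp.dim {0 :: 'a mpoly} = 0"
    by (rule mp.dim_unique[of "{}"]) (simp_all add: mp.span_empty mp.independent_empty)
  ultimately show ?thesis using False by (simp add: dimA_def image_funpow_contract_derivatives)
qed

lemma derivatives_contract_nilpotent:
  fixes F l :: "('a::field) mpoly"
  assumes "homogeneous d F" "homogeneous 1 l"
  shows "\<forall>x\<in>derivatives n F. ((\<lambda>x. l \<circ>\<^sub>D x) ^^ Suc d) x = 0"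
proof -
  have "((\<lambda>x. l \<circ>\<^sub>D x) ^^ Suc d) ` derivatives n F = derivatives n (l ^ Suc d \<circ>\<^sub>D F)"
    by (rule image_funpow_contract_derivatives)
  also have "l ^ Suc d \<circ>\<^sub>D F = 0"
    by (rule contract_eq_zero_if_degree_less[OF homogeneous_pow[OF assms(2)] assms(1)]) simp
  also have "derivatives n 0 = {0}" by (rule derivatives_zero)
  finally show ?thesis by blast
qed

definition jordan_strings ::
    "('a::comm_ring_1) mpoly set \<Rightarrow> 'a mpoly set \<Rightarrow> 'a mpoly \<Rightarrow> ('a mpoly \<times> nat) list \<Rightarrow> bool" where
  "jordan_strings S I l js \<longleftrightarrow> (\<forall>(v, k)\<in>set js. 1 \<le> k \<and> l ^ k * v \<in> I) \<and>
     basis_mod S I (\<lambda>(j, t). l ^ t * fst (js ! j)) {(j, t). j < length js \<and> t < snd (js ! j)}"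

lemma jordan_type_eqI:
  assumes "jordan_strings S I l js"
    and "\<And>js'. jordan_strings S I l js' \<Longrightarrow> mset (map snd js') = mset (map snd js)"
  shows "jordan_type S I l = mset (map snd js)"
proof -
  have "jordan_type S I l = (THE P. \<exists>js. P = mset (map snd js) \<and> jordan_strings S I l js)"
    by (simp add: jordan_type_def jordan_strings_def)
  also have "\<dots> = mset (map snd js)"
    by (rule the_equality) (use assms in blast)+
  finally show ?thesis .
qed

lemma jordan_strings_start_in:
  assumes "jordan_strings S I l js" "j < length js"
  shows "fst (js ! j) \<in> S"
proof -
  have "\<forall>(v, k)\<in>set js. 1 \<le> k \<and> l ^ k * v \<in> I" using assms(1) by (simp add: jordan_strings_def)
  from bspec[OF this nth_mem[OF assms(2)]] have "(j, 0) \<in> {(j, t). j < length js \<and> t < snd (js ! j)}"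
    using assms(2) by (simp add: case_prod_beta)
  moreover have "(\<lambda>(j, t). l ^ t * fst (js ! j)) ` {(j, t). j < length js \<and> t < snd (js ! j)} \<subseteq> S"
    using assms(1) by (simp add: jordan_strings_def basis_mod_def)
  ultimately show ?thesis by force
qed

lemma jordan_strings_Ann_iff:
  fixes F l :: "('a::field) mpoly"
  assumes l: "l \<in> polys n" and starts: "fst ` set js \<subseteq> polys n"
  shows "jordan_strings (polys n) (Ann n F) l js \<longleftrightarrow>
    contraction.jordan_basis l (derivatives n F) (map (\<lambda>(v, k). (v \<circ>\<^sub>D F, k)) js)"
proof -
  let ?js = "map (\<lambda>(v, k). (v \<circ>\<^sub>D F, k)) js"
  let ?J = "{(j, t). j < length js \<and> t < snd (js ! j)}"
  have index: "contraction.string_index ?js = ?J"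
    by (auto simp: case_prod_beta)
  have vec: "(case jt of (j, t) \<Rightarrow> l ^ t * fst (js ! j)) \<circ>\<^sub>D F = contraction.string_vec l ?js jt"
    if "jt \<in> ?J" for jt
    using that by (cases jt) (simp add: funpow_contract contract_assoc case_prod_beta)
  have kill: "l ^ k * v \<in> Ann n F \<longleftrightarrow> ((\<lambda>x. l \<circ>\<^sub>D x) ^^ k) (v \<circ>\<^sub>D F) = 0" if "v \<in> polys n" for v k
    using that l by (simp add: Ann_def funpow_contract contract_assoc polys_mult polys_pow)
  have strings: "(\<forall>(v, k)\<in>set js. 1 \<le> k \<and> l ^ k * v \<in> Ann n F) \<longleftrightarrow>
      (\<forall>(w, k)\<in>set ?js. 1 \<le> k \<and> ((\<lambda>x. l \<circ>\<^sub>D x) ^^ k) w = 0)"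
    using starts kill by fastforce
  have "fst (js ! j) \<in> polys n" if "j < length js" for j
    using starts nth_mem[OF that] by blast
  hence "(\<lambda>(j, t). l ^ t * fst (js ! j)) ` ?J \<subseteq> polys n"
    using l by (auto simp: polys_mult polys_pow)
  hence "basis_mod (polys n) (Ann n F) (\<lambda>(j, t). l ^ t * fst (js ! j)) ?J \<longleftrightarrow>
      mp.fam_basis (derivatives n F) (\<lambda>jt. (case jt of (j, t) \<Rightarrow> l ^ t * fst (js ! j)) \<circ>\<^sub>D F) ?J"
    by (simp add: basis_mod_Ann_iff)
  also have "\<dots> \<longleftrightarrow> mp.fam_basis (derivatives n F) (contraction.string_vec l ?js) (contraction.string_index ?js)"
    unfolding index
  proof
    assume "mp.fam_basis (derivatives n F) (\<lambda>jt. (case jt of (j, t) \<Rightarrow> l ^ t * fst (js ! j)) \<circ>\<^sub>D F) ?J"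
    thus "mp.fam_basis (derivatives n F) (contraction.string_vec l ?js) ?J"
      by (rule mp.fam_basis_cong) (rule vec)
  next
    assume "mp.fam_basis (derivatives n F) (contraction.string_vec l ?js) ?J"
    thus "mp.fam_basis (derivatives n F) (\<lambda>jt. (case jt of (j, t) \<Rightarrow> l ^ t * fst (js ! j)) \<circ>\<^sub>D F) ?J"
      by (rule mp.fam_basis_cong) (rule vec[symmetric])
  qed
  finally have basis: "basis_mod (polys n) (Ann n F) (\<lambda>(j, t). l ^ t * fst (js ! j)) ?J \<longleftrightarrow>
      mp.fam_basis (derivatives n F) (contraction.string_vec l ?js) (contraction.string_index ?js)" .
  show ?thesis unfolding jordan_strings_def contraction.jordan_basis_def strings basis ..
qed

lemma jordan_type_Ann:
  fixes F l :: "('a::field) mpoly"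
  assumes l: "l \<in> polys n" and js: "contraction.jordan_basis l (derivatives n F) js"
  shows "jordan_type (polys n) (Ann n F) l = mset (map snd js)"
proof -
  have "\<forall>w\<in>derivatives n F. \<exists>g. g \<in> polys n \<and> g \<circ>\<^sub>D F = w"
    by (auto simp: derivatives_def)
  from bchoice[OF this] obtain pre where pre: "\<forall>w\<in>derivatives n F. pre w \<in> polys n \<and> pre w \<circ>\<^sub>D F = w" ..
  define js' where "js' = map (\<lambda>(w, k). (pre w, k)) js"
  have starts: "fst (js ! j) \<in> derivatives n F" if "j < length js" for j
    using contraction.jordan_basis_start_in[OF js that] .
  have "fst ` set js' \<subseteq> polys n"
  proof
    fix v assume "v \<in> fst ` set js'"
    then obtain j where "j < length js" "v = pre (fst (js ! j))"
      by (auto simp: js'_def in_set_conv_nth case_prod_beta)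
    thus "v \<in> polys n" using pre starts by blast
  qed
  moreover have "map (\<lambda>(v, k). (v \<circ>\<^sub>D F, k)) js' = js"
    using pre starts by (auto simp: js'_def case_prod_beta intro!: nth_equalityI)
  ultimately have strings: "jordan_strings (polys n) (Ann n F) l js'"
    using jordan_strings_Ann_iff[OF l] js by simp
  have "mset (map snd js'') = mset (map snd js)" if "jordan_strings (polys n) (Ann n F) l js''" for js''
  proof -
    have "fst ` set js'' \<subseteq> polys n"
    proof
      fix v assume "v \<in> fst ` set js''"
      then obtain j where "j < length js''" "v = fst (js'' ! j)" by (auto simp: in_set_conv_nth)
      thus "v \<in> polys n" using jordan_strings_start_in[OF that] by simp
    qed
    hence "contraction.jordan_basis l (derivatives n F) (map (\<lambda>(v, k). (v \<circ>\<^sub>D F, k)) js'')"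
      using jordan_strings_Ann_iff[OF l] that by simp
    from contraction.jordan_basis_lengths_unique[OF this js] show ?thesis
      by (simp add: case_prod_beta comp_def)
  qed
  moreover have "mset (map snd js') = mset (map snd js)"
    by (simp add: js'_def case_prod_beta comp_def)
  ultimately show ?thesis using jordan_type_eqI[OF strings] by simp
qed

lemma mset_eq_sum_replicate_count:
  assumes "set_mset M \<subseteq> {1..Suc d}"
  shows "M = (\<Sum>i\<in>{0..d}. replicate_mset (count M (i + 1)) (i + 1))"
proof (rule multiset_eqI)
  fix k
  have "count (\<Sum>i\<in>{0..d}. replicate_mset (count M (i + 1)) (i + 1)) k
      = (\<Sum>i\<in>{0..d}. if i + 1 = k then count M k else 0)"
    by (simp add: count_sum) (rule sum.cong, auto)
  also have "\<dots> = count M k"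
  proof (cases "k \<in> {1..Suc d}")
    case True
    hence "{0..d} \<inter> {i. i + 1 = k} = {k - 1}" by auto
    thus ?thesis by (simp add: sum.If_cases)
  next
    case False
    thus ?thesis using assms by (auto simp: not_in_iff[symmetric])
  qed
  finally show "count M k = count (\<Sum>i\<in>{0..d}. replicate_mset (count M (i + 1)) (i + 1)) k" ..
qed

theorem proposition3p14:
  fixes F l :: "'a::field_char_0 mpoly" and n d :: nat
  assumes "n \<ge> 2" and "d \<ge> 2"
    and "F \<in> polys n" and "F \<noteq> 0" and "homogeneous d F"
    and "l \<in> polys n" and "homogeneous 1 l"
  defines "nn \<equiv> (\<lambda>i. int (dimA n d F l i) + int (dimA n d F l (i + 2)) - 2 * int (dimA n d F l (i + 1)))"
  shows "(\<forall>i\<le>d. nn i \<ge> 0) \<and>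
         jordan_type (polys n) (Ann n F) l = (\<Sum>i\<in>{0..d}. replicate_mset (nat (nn i)) (i + 1))"
proof -
  have nilpotent: "\<forall>x\<in>derivatives n F. ((\<lambda>x. l \<circ>\<^sub>D x) ^^ Suc d) x = 0"
    using \<open>homogeneous d F\<close> \<open>homogeneous 1 l\<close> by (rule derivatives_contract_nilpotent)
  obtain T where "finite T" "derivatives n F \<subseteq> mp.span T" using derivatives_finite_span by blast
  hence "\<exists>js. contraction.jordan_basis l (derivatives n F) js"
    by (intro contraction.jordan_basis_exists[OF subspace_derivatives
          contract_derivatives_subset[OF \<open>l \<in> polys n\<close>] _ _ nilpotent])
  then obtain js where js: "contraction.jordan_basis l (derivatives n F) js" ..
  define M where "M = mset (map snd js)"
  have count: "nn i = int (count M (Suc i))" for i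
    using contraction.jordan_basis_count[OF js, of i]
    by (simp add: nn_def M_def dimA_eq_rank[OF \<open>homogeneous d F\<close> \<open>homogeneous 1 l\<close>])
  have "M = (\<Sum>i\<in>{0..d}. replicate_mset (count M (i + 1)) (i + 1))"
    using contraction.jordan_basis_lengths_bounded[OF js nilpotent] unfolding M_def
    by (rule mset_eq_sum_replicate_count)
  moreover have "jordan_type (polys n) (Ann n F) l = M"
    unfolding M_def using \<open>l \<in> polys n\<close> js by (rule jordan_type_Ann)
  ultimately show ?thesis using count by simp
qed

end
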